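(* Let $m\ge1$, $0<\lambda_1\le\dots\le\lambda_m$, $0<\Lambda_0\le\Lambda_1$, and let $a,b$ be positive definite (symmetric) $m\times m$ matrices with $\Lambda_0I\le a,b\le\Lambda_1I$. Set $\theta=\Lambda_0^{-1}m\|a-b\|_s$. Then for all $t>0$, $$\Big|\frac{\det\widetilde b(t)}{\det\widetilde a(t)}-1\Big|\le\theta e^\theta.$$
   Context: $a(t)$ has entries $a_{ij}(1-e^{-(\lambda_i+\lambda_j)t})/(\lambda_i+\lambda_j)$; $g(t)$ is diagonal with $g_{ii}(t)=(1-e^{-2\lambda_it})/(2\lambda_i)$, $G(t)=g(t)^{-1}$; $\widetilde a(t)=G(t)^{1/2}a(t)G(t)^{1/2}$, and $\widetilde b(t)$ analogously from $b$. $\|c\|_s=\max\{\sup_i\sum_j|c_{ij}|,\sup_j\sum_i|c_{ij}|\}$. *)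

theory Defs
  imports Complex_Main "Jordan_Normal_Form.Determinant"
begin

definition loewner_le :: "nat \<Rightarrow> real mat \<Rightarrow> real mat \<Rightarrow> bool" where
  "loewner_le m A B \<longleftrightarrow> (\<forall>v \<in> carrier_vec m. 0 \<le> v \<bullet> ((B - A) *\<^sub>v v))"

definition snorm :: "nat \<Rightarrow> real mat \<Rightarrow> real" where
  "snorm m c = max (Max {\<Sum>j<m. \<bar>c $$ (i,j)\<bar> | i. i < m})
                   (Max {\<Sum>i<m. \<bar>c $$ (i,j)\<bar> | j. j < m})"

definition mat_t :: "nat \<Rightarrow> (nat \<Rightarrow> real) \<Rightarrow> real mat \<Rightarrow> real \<Rightarrow> real mat" where
  "mat_t m lam a t = mat m m (\<lambda>(i,j). a $$ (i,j) * (1 - exp (-(lam i + lam j) * t)) / (lam i + lam j))"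

definition g_t :: "nat \<Rightarrow> (nat \<Rightarrow> real) \<Rightarrow> real \<Rightarrow> real mat" where
  "g_t m lam t = mat_diag m (\<lambda>i. (1 - exp (-2 * lam i * t)) / (2 * lam i))"

definition G_half :: "nat \<Rightarrow> (nat \<Rightarrow> real) \<Rightarrow> real \<Rightarrow> real mat" where
  "G_half m lam t = mat_diag m (\<lambda>i. sqrt (1 / (g_t m lam t $$ (i,i))))"

definition tilde_t :: "nat \<Rightarrow> (nat \<Rightarrow> real) \<Rightarrow> real mat \<Rightarrow> real \<Rightarrow> real mat" where
  "tilde_t m lam a t = G_half m lam t * mat_t m lam a t * G_half m lam t"

end

theory Submission imports Defs begin

text \<open>
  Put k_ij(t) = (1 - exp (-(lam_i + lam_j) t)) / (lam_i + lam_j), the integral of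
  exp (-(lam_i + lam_j) s) over [0, t].  Then a(t) is the Hadamard product of a with k(t), and g(t)
  is the diagonal of k(t).  Being an integral of rank-one positive semidefinite kernels, k(t)
  preserves positive semidefiniteness under Hadamard products.  Hence a \<ge> \<Lambda>0 I gives
  tilde a(t) \<ge> \<Lambda>0 I, and the normalised kernel G^(1/2) k G^(1/2) has entries of modulus at most 1,
  so by the Schur test the quadratic forms of tilde a(t) and tilde b(t) differ by at most
  \<parallel>a - b\<parallel>_s |x|^2 \<le> \<delta> x^T (tilde a(t)) x, where \<delta> = \<parallel>a - b\<parallel>_s / \<Lambda>0.  As the determinant
  is monotone in the Loewner order on positive definite matrices (by induction over Schur
  complements), det (tilde b(t)) / det (tilde a(t)) lies between (1 - \<delta>)^m and (1 + \<delta>)^m \<le> e^\<theta>.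
\<close>

definition quad_form :: "nat \<Rightarrow> real mat \<Rightarrow> (nat \<Rightarrow> real) \<Rightarrow> real" where
  "quad_form n M x = (\<Sum>i<n. \<Sum>j<n. x i * M $$ (i,j) * x j)"

definition schur_complement :: "nat \<Rightarrow> real mat \<Rightarrow> real mat" where
  "schur_complement k M =
     mat k k (\<lambda>(i,j). M $$ (Suc i, Suc j) - M $$ (Suc i, 0) * M $$ (0, Suc j) / M $$ (0,0))"

lemma transpose_mat_eq_self_entry:
  assumes "M \<in> carrier_mat n n" and "transpose_mat M = M" and "i < n" and "j < n"
  shows "M $$ (i,j) = M $$ (j,i)"
  using assms by (metis carrier_matD index_transpose_mat(1))

lemma schur_complement_carrier [simp]: "schur_complement k M \<in> carrier_mat k k"
  unfolding schur_complement_def by simp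

lemma transpose_schur_complement:
  assumes "M \<in> carrier_mat (Suc k) (Suc k)" and "transpose_mat M = M"
  shows "transpose_mat (schur_complement k M) = schur_complement k M"
  using transpose_mat_eq_self_entry[OF assms]
  by (intro eq_matI) (auto simp: schur_complement_def)

lemma det_eq_pivot_mult_det_schur_complement:
  fixes M :: "real mat"
  assumes M: "M \<in> carrier_mat (Suc k) (Suc k)" and pivot: "M $$ (0,0) \<noteq> 0"
  shows "det M = M $$ (0,0) * det (schur_complement k M)"
proof -
  \<comment> \<open>\<open>E\<close> clears the first column below the pivot.\<close>
  define E where "E = mat (Suc k) (Suc k)
    (\<lambda>(i,j). if i = j then 1 else if j = 0 then - M $$ (i,0) / M $$ (0,0) else (0::real))"
  have E: "E \<in> carrier_mat (Suc k) (Suc k)" unfolding E_def by simp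
  have det_E: "det E = 1"
    by (subst det_lower_triangular[of "Suc k"]) (auto simp: E_def prod_list_diag_prod)
  define N where "N = E * M"
  have N: "N \<in> carrier_mat (Suc k) (Suc k)" using E M unfolding N_def by simp
  have N_entry: "N $$ (i,j) =
      (if i = 0 then M $$ (0,j) else M $$ (i,j) - M $$ (i,0) / M $$ (0,0) * M $$ (0,j))"
    if "i < Suc k" "j < Suc k" for i j
  proof (cases "i = 0")
    case True
    then show ?thesis
      using that E M by (simp add: N_def scalar_prod_def sum.remove[of _ 0] E_def)
  next
    case False
    have "N $$ (i,j) = (\<Sum>l\<in>{0..<Suc k}. E $$ (i,l) * M $$ (l,j))"
      unfolding N_def using that E M by (simp add: scalar_prod_def)
    also have "\<dots> = E $$ (i,i) * M $$ (i,j) + E $$ (i,0) * M $$ (0,j)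
        + (\<Sum>l\<in>{0..<Suc k} - {i} - {0}. E $$ (i,l) * M $$ (l,j))"
      using that False by (subst sum.remove[of _ i], simp, simp, subst sum.remove[of _ 0]) auto
    also have "(\<Sum>l\<in>{0..<Suc k} - {i} - {0}. E $$ (i,l) * M $$ (l,j)) = 0"
      using that by (intro sum.neutral) (auto simp: E_def)
    finally show ?thesis using False that by (simp add: E_def)
  qed
  have "det N = (\<Sum>i<Suc k. N $$ (i,0) * cofactor N i 0)"
    using laplace_expansion_column[OF N, of 0] by simp
  also have "\<dots> = N $$ (0,0) * cofactor N 0 0"
    by (subst sum.remove[of _ 0]) (auto simp: N_entry pivot intro!: sum.neutral)
  finally have "det N = N $$ (0,0) * cofactor N 0 0" .
  moreover have "mat_delete N 0 0 = schur_complement k M"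
    using N by (intro eq_matI) (auto simp: mat_delete_def N_entry schur_complement_def)
  ultimately show ?thesis
    using det_mult[OF E M] det_E by (simp add: N_def[symmetric] cofactor_def N_entry)
qed

lemma quad_form_first_unit_vector: "quad_form (Suc k) M (case_nat 1 (\<lambda>_. 0)) = M $$ (0,0)"
  unfolding quad_form_def sum.lessThan_Suc_shift by simp

lemma sum_squares_case_nat: "(\<Sum>i<Suc k. (case_nat \<alpha> x i)\<^sup>2) = \<alpha>\<^sup>2 + (\<Sum>i<k. (x i)\<^sup>2)"
  unfolding sum.lessThan_Suc_shift by simp

lemma quad_form_Suc_complete_square:
  fixes M :: "real mat"
  assumes sym: "\<And>j. j < k \<Longrightarrow> M $$ (Suc j, 0) = M $$ (0, Suc j)" and pivot: "M $$ (0,0) \<noteq> 0"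
  shows "quad_form (Suc k) M (case_nat \<alpha> x) = quad_form k (schur_complement k M) x
           + M $$ (0,0) * (\<alpha> + (\<Sum>j<k. M $$ (0, Suc j) * x j) / M $$ (0,0))\<^sup>2"
proof -
  define L where "L = (\<Sum>j<k. M $$ (0, Suc j) * x j)"
  have L_col: "(\<Sum>i<k. x i * M $$ (Suc i, 0)) = L"
    unfolding L_def by (rule sum.cong) (auto simp: sym mult.commute)
  have "quad_form k (schur_complement k M) x
      = (\<Sum>i<k. \<Sum>j<k. x i * M $$ (Suc i, Suc j) * x j
           - (x i * M $$ (Suc i, 0)) * (M $$ (0, Suc j) * x j) / M $$ (0,0))"
    unfolding quad_form_def schur_complement_def
    by (intro sum.cong refl) (auto simp: algebra_simps diff_divide_distrib)
  also have "\<dots> = (\<Sum>i<k. \<Sum>j<k. x i * M $$ (Suc i, Suc j) * x j)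
      - (\<Sum>i<k. x i * M $$ (Suc i, 0)) * (\<Sum>j<k. M $$ (0, Suc j) * x j) / M $$ (0,0)"
    by (simp add: sum_subtractf sum_distrib_left sum_distrib_right sum_divide_distrib)
       (rule sum.swap)
  also have "\<dots> = (\<Sum>i<k. \<Sum>j<k. x i * M $$ (Suc i, Suc j) * x j) - L * L / M $$ (0,0)"
    unfolding L_col L_def ..
  finally have schur: "quad_form k (schur_complement k M) x
      = (\<Sum>i<k. \<Sum>j<k. x i * M $$ (Suc i, Suc j) * x j) - L * L / M $$ (0,0)" .
  have L_row_left: "(\<Sum>j<k. \<alpha> * M $$ (0, Suc j) * x j) = \<alpha> * L"
    unfolding L_def by (simp add: sum_distrib_left mult.assoc)
  have L_col_right: "(\<Sum>i<k. x i * M $$ (Suc i, 0) * \<alpha>) = L * \<alpha>"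
    unfolding L_col[symmetric] by (simp add: sum_distrib_right)
  have "quad_form (Suc k) M (case_nat \<alpha> x)
      = \<alpha> * M $$ (0,0) * \<alpha> + (\<Sum>j<k. \<alpha> * M $$ (0, Suc j) * x j)
        + (\<Sum>i<k. x i * M $$ (Suc i, 0) * \<alpha>) + (\<Sum>i<k. \<Sum>j<k. x i * M $$ (Suc i, Suc j) * x j)"
    unfolding quad_form_def sum.lessThan_Suc_shift by (simp add: sum.distrib del: sum.lessThan_Suc)
  also have "\<dots> = quad_form k (schur_complement k M) x + M $$ (0,0) * (\<alpha> + L / M $$ (0,0))\<^sup>2"
    unfolding L_row_left L_col_right schur using pivot by (simp add: field_simps power2_eq_square)
  finally show ?thesis unfolding L_def .
qed

lemma quad_form_schur_complement_le:
  fixes M :: "real mat"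
  assumes "\<And>j. j < k \<Longrightarrow> M $$ (Suc j, 0) = M $$ (0, Suc j)" and "0 < M $$ (0,0)"
  shows "quad_form k (schur_complement k M) x \<le> quad_form (Suc k) M (case_nat \<alpha> x)"
  using quad_form_Suc_complete_square[where k=k and M=M, OF assms(1)] assms(2) by simp

lemma quad_form_schur_complement_attained:
  fixes M :: "real mat"
  assumes "\<And>j. j < k \<Longrightarrow> M $$ (Suc j, 0) = M $$ (0, Suc j)" and "M $$ (0,0) \<noteq> 0"
  obtains \<alpha> where "quad_form k (schur_complement k M) x = quad_form (Suc k) M (case_nat \<alpha> x)"
proof (rule that)
  show "quad_form k (schur_complement k M) x
      = quad_form (Suc k) M (case_nat (- (\<Sum>j<k. M $$ (0, Suc j) * x j) / M $$ (0,0)) x)"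
    using quad_form_Suc_complete_square[where k=k and M=M, OF assms] by simp
qed

text \<open>The conjunct \<open>0 < det A\<close> is what makes the induction step go through.\<close>
lemma det_mono_quad_form:
  fixes A B :: "real mat"
  assumes "A \<in> carrier_mat n n" and "B \<in> carrier_mat n n"
    and "transpose_mat A = A" and "transpose_mat B = B"
    and "0 < d" and "\<And>x. d * (\<Sum>i<n. (x i)\<^sup>2) \<le> quad_form n A x"
    and "0 < c" and "\<And>x. c * quad_form n A x \<le> quad_form n B x"
  shows "0 < det A \<and> c ^ n * det A \<le> det B"
  using assms
proof (induction n arbitrary: A B)
  case 0
  then show ?case by simp
next
  case (Suc k)
  note A = Suc.prems(1) and B = Suc.prems(2) and d = Suc.prems(5)
    and coercive = Suc.prems(6) and c = Suc.prems(7) and le = Suc.prems(8)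
  have symA: "\<And>j. j < k \<Longrightarrow> A $$ (Suc j, 0) = A $$ (0, Suc j)"
    and symB: "\<And>j. j < k \<Longrightarrow> B $$ (Suc j, 0) = B $$ (0, Suc j)"
    using transpose_mat_eq_self_entry[OF A Suc.prems(3)] transpose_mat_eq_self_entry[OF B Suc.prems(4)]
    by auto
  have A00: "d \<le> A $$ (0,0)"
    using coercive[of "case_nat 1 (\<lambda>_. 0)"]
    unfolding quad_form_first_unit_vector sum_squares_case_nat by simp
  then have A00_pos: "0 < A $$ (0,0)" using d by simp
  have B00: "c * A $$ (0,0) \<le> B $$ (0,0)"
    using le[of "case_nat 1 (\<lambda>_. 0)"] unfolding quad_form_first_unit_vector .
  then have B00_pos: "0 < B $$ (0,0)" using A00_pos c by (meson mult_pos_pos order_less_le_trans)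
  have IH: "0 < det (schur_complement k A)
      \<and> c ^ k * det (schur_complement k A) \<le> det (schur_complement k B)"
  proof (rule Suc.IH)
    show "transpose_mat (schur_complement k A) = schur_complement k A"
      "transpose_mat (schur_complement k B) = schur_complement k B"
      using transpose_schur_complement A B Suc.prems(3,4) by blast+
    show "d * (\<Sum>i<k. (x i)\<^sup>2) \<le> quad_form k (schur_complement k A) x" for x
    proof -
      obtain \<alpha> where "quad_form k (schur_complement k A) x = quad_form (Suc k) A (case_nat \<alpha> x)"
        using quad_form_schur_complement_attained[OF symA] A00_pos by auto
      moreover have "d * (\<Sum>i<k. (x i)\<^sup>2) \<le> d * (\<Sum>i<Suc k. (case_nat \<alpha> x i)\<^sup>2)"
        using d unfolding sum_squares_case_nat by simp
      ultimately show ?thesis using coercive[of "case_nat \<alpha> x"] by linarith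
    qed
    show "c * quad_form k (schur_complement k A) x \<le> quad_form k (schur_complement k B) x" for x
    proof -
      obtain \<alpha> where "quad_form k (schur_complement k B) x = quad_form (Suc k) B (case_nat \<alpha> x)"
        using quad_form_schur_complement_attained[OF symB] B00_pos by auto
      moreover have "c * quad_form k (schur_complement k A) x \<le> c * quad_form (Suc k) A (case_nat \<alpha> x)"
        using quad_form_schur_complement_le[OF symA A00_pos] c by simp
      ultimately show ?thesis using le[of "case_nat \<alpha> x"] by linarith
    qed
  qed (use d c in auto)
  have "c ^ Suc k * det A = (c * A $$ (0,0)) * (c ^ k * det (schur_complement k A))"
    using det_eq_pivot_mult_det_schur_complement[OF A] A00_pos by simp
  also have "\<dots> \<le> B $$ (0,0) * det (schur_complement k B)"
    using IH B00 A00_pos B00_pos c by (intro mult_mono) auto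
  also have "\<dots> = det B"
    using det_eq_pivot_mult_det_schur_complement[OF B] B00_pos by simp
  finally show ?case
    using det_eq_pivot_mult_det_schur_complement[OF A] A00_pos IH by simp
qed

lemma det_le_pow_mult_det_if_quad_form_le:
  fixes A B :: "real mat"
  assumes A: "A \<in> carrier_mat n n" and B: "B \<in> carrier_mat n n"
    and symA: "transpose_mat A = A" and symB: "transpose_mat B = B"
    and d: "0 < d" and coerciveB: "\<And>x. d * (\<Sum>i<n. (x i)\<^sup>2) \<le> quad_form n B x"
    and c: "0 < c" and le: "\<And>x. quad_form n B x \<le> c * quad_form n A x"
  shows "det B \<le> c ^ n * det A"
proof -
  have "(1 / c) ^ n * det B \<le> det A"
  proof (rule det_mono_quad_form[OF B A symB symA d coerciveB, THEN conjunct2])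
    show "1 / c * quad_form n B x \<le> quad_form n A x" for x
      using le[of x] c by (simp add: field_simps)
  qed (use c in simp)
  then show ?thesis using c by (simp add: power_one_over field_simps)
qed

lemma abs_sub_one_le_of_power_bounds:
  fixes r \<delta> :: real
  assumes n: "0 < n" and r: "0 < r" and \<delta>: "0 \<le> \<delta>"
    and upper: "r \<le> (1 + \<delta>) ^ n" and lower: "\<delta> < 1 \<Longrightarrow> (1 - \<delta>) ^ n \<le> r"
  shows "\<bar>r - 1\<bar> \<le> n * \<delta> * exp (n * \<delta>)"
proof -
  have "(1 + \<delta>) ^ n \<le> exp \<delta> ^ n"
    using \<delta> by (intro power_mono) (auto simp: add.commute)
  then have "r - 1 \<le> exp (n * \<delta>) - 1"
    using upper by (simp add: exp_of_nat_mult)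
  also have "\<dots> \<le> n * \<delta> * exp (n * \<delta>)"
  proof -
    have "(1 - n * \<delta>) * exp (n * \<delta>) \<le> exp (- (n * \<delta>)) * exp (n * \<delta>)"
      using exp_ge_add_one_self[of "- (n * \<delta>)"] by (intro mult_right_mono) auto
    then show ?thesis by (simp add: exp_minus algebra_simps)
  qed
  finally have "r - 1 \<le> n * \<delta> * exp (n * \<delta>)" .
  moreover have "1 - r \<le> n * \<delta>"
  proof (cases "\<delta> < 1")
    case True
    have "1 + n * (- \<delta>) \<le> (1 + - \<delta>) ^ n"
      using True by (intro Bernoulli_inequality) simp
    then show ?thesis using lower[OF True] by simp
  next
    case False
    then have "1 * 1 \<le> n * \<delta>" using n by (intro mult_mono) auto
    then show ?thesis using r by simp
  qed
  moreover have "n * \<delta> \<le> n * \<delta> * exp (n * \<delta>)"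
    using \<delta> by (simp add: mult_le_cancel_left1)
  ultimately show ?thesis by linarith
qed

lemma det_ratio_bound_if_quad_form_close:
  fixes A B :: "real mat"
  assumes A: "A \<in> carrier_mat n n" and B: "B \<in> carrier_mat n n"
    and symA: "transpose_mat A = A" and symB: "transpose_mat B = B"
    and n: "0 < n" and d: "0 < d"
    and coerciveA: "\<And>x. d * (\<Sum>i<n. (x i)\<^sup>2) \<le> quad_form n A x"
    and coerciveB: "\<And>x. d * (\<Sum>i<n. (x i)\<^sup>2) \<le> quad_form n B x"
    and close: "\<And>x. \<bar>quad_form n B x - quad_form n A x\<bar> \<le> s * (\<Sum>i<n. (x i)\<^sup>2)"
  shows "\<bar>det B / det A - 1\<bar> \<le> n * s / d * exp (n * s / d)"
proof -
  define \<delta> where "\<delta> = s / d"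
  have "\<bar>quad_form n B (\<lambda>_. 1) - quad_form n A (\<lambda>_. 1)\<bar> \<le> s * n"
    using close[of "\<lambda>_. 1"] by simp
  then have "0 \<le> s * n" by (rule order_trans[OF abs_ge_zero])
  then have \<delta>_nonneg: "0 \<le> \<delta>" unfolding \<delta>_def using n d by (simp add: zero_le_mult_iff)
  have rel: "\<bar>quad_form n B x - quad_form n A x\<bar> \<le> \<delta> * quad_form n A x" for x
  proof -
    have "s * (\<Sum>i<n. (x i)\<^sup>2) = \<delta> * (d * (\<Sum>i<n. (x i)\<^sup>2))" unfolding \<delta>_def using d by simp
    also have "\<dots> \<le> \<delta> * quad_form n A x" using coerciveA \<delta>_nonneg by (rule mult_left_mono)
    finally show ?thesis by (rule order_trans[OF close])
  qed
  have detA: "0 < det A" and detB: "0 < det B"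
    using det_mono_quad_form[OF A A symA symA d coerciveA, of 1]
      det_mono_quad_form[OF B B symB symB d coerciveB, of 1] by auto
  have "det B \<le> (1 + \<delta>) ^ n * det A"
  proof (rule det_le_pow_mult_det_if_quad_form_le[OF A B symA symB d coerciveB])
    show "quad_form n B x \<le> (1 + \<delta>) * quad_form n A x" for x
      using rel[of x] by (simp add: abs_le_iff algebra_simps)
  qed (use \<delta>_nonneg in simp)
  then have upper: "det B / det A \<le> (1 + \<delta>) ^ n"
    using detA by (simp add: pos_divide_le_eq mult.commute)
  have lower: "(1 - \<delta>) ^ n \<le> det B / det A" if "\<delta> < 1"
  proof -
    have "(1 - \<delta>) ^ n * det A \<le> det B"
    proof (rule det_mono_quad_form[OF A B symA symB d coerciveA, THEN conjunct2])
      show "(1 - \<delta>) * quad_form n A x \<le> quad_form n B x" for x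
        using rel[of x] by (simp add: algebra_simps abs_le_iff)
    qed (use that in simp)
    then show ?thesis using detA by (simp add: pos_le_divide_eq)
  qed
  have "\<bar>det B / det A - 1\<bar> \<le> n * \<delta> * exp (n * \<delta>)"
    using abs_sub_one_le_of_power_bounds[OF n _ \<delta>_nonneg upper lower] detA detB by simp
  then show ?thesis unfolding \<delta>_def by simp
qed

definition decay_kernel :: "(nat \<Rightarrow> real) \<Rightarrow> real \<Rightarrow> nat \<Rightarrow> nat \<Rightarrow> real" where
  "decay_kernel lam t i j = (1 - exp (- (lam i + lam j) * t)) / (lam i + lam j)"

definition kernel_scale :: "(nat \<Rightarrow> real) \<Rightarrow> real \<Rightarrow> nat \<Rightarrow> real" where
  "kernel_scale lam t i = sqrt (1 / decay_kernel lam t i i)"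

lemma decay_kernel_commute: "decay_kernel lam t i j = decay_kernel lam t j i"
  unfolding decay_kernel_def by (simp add: add.commute)

lemma decay_kernel_diag: "decay_kernel lam t i i = (1 - exp (- 2 * lam i * t)) / (2 * lam i)"
  unfolding decay_kernel_def by (simp add: algebra_simps)

lemma decay_kernel_pos:
  assumes "0 < lam i" and "0 < lam j" and "0 < t"
  shows "0 < decay_kernel lam t i j"
proof -
  have "- (lam i + lam j) * t < 0" using assms by (intro mult_neg_pos) auto
  then have "exp (- (lam i + lam j) * t) < 1" by simp
  then show ?thesis unfolding decay_kernel_def using assms by simp
qed

text \<open>As a function of t the sum vanishes at 0, and its derivative is the quadratic form of P
  at the vector y_i exp (- lam_i t).\<close>
lemma hadamard_decay_kernel_nonneg:
  fixes P :: "nat \<Rightarrow> nat \<Rightarrow> real"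
  assumes psd: "\<And>z. 0 \<le> (\<Sum>i<n. \<Sum>j<n. z i * P i j * z j)"
    and lam: "\<And>i. i < n \<Longrightarrow> 0 < lam i" and t: "0 \<le> t"
  shows "0 \<le> (\<Sum>i<n. \<Sum>j<n. y i * P i j * y j * decay_kernel lam t i j)"
proof -
  define F where "F s = (\<Sum>i<n. \<Sum>j<n. y i * P i j * y j * decay_kernel lam s i j)" for s
  define z where "z s i = y i * exp (- lam i * s)" for s i
  have kernel_deriv: "((\<lambda>s. decay_kernel lam s i j) has_real_derivative exp (- (lam i + lam j) * s)) (at s)"
    if "i < n" "j < n" for i j s
  proof -
    have "((\<lambda>s. (1 - exp (- u * s)) / u) has_real_derivative exp (- u * s)) (at s)"
      if "u \<noteq> 0" for u :: real
      using that by (auto intro!: derivative_eq_intros simp: field_simps)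
    moreover have "lam i + lam j \<noteq> 0" using lam[OF that(1)] lam[OF that(2)] by simp
    ultimately show ?thesis unfolding decay_kernel_def by blast
  qed
  have "(F has_real_derivative (\<Sum>i<n. \<Sum>j<n. y i * P i j * y j * exp (- (lam i + lam j) * s))) (at s)"
    for s unfolding F_def by (intro DERIV_sum DERIV_cmult kernel_deriv) auto
  moreover have "(\<Sum>i<n. \<Sum>j<n. y i * P i j * y j * exp (- (lam i + lam j) * s))
      = (\<Sum>i<n. \<Sum>j<n. z s i * P i j * z s j)" for s
    unfolding z_def by (intro sum.cong refl) (simp add: algebra_simps exp_add[symmetric])
  ultimately have "(F has_real_derivative (\<Sum>i<n. \<Sum>j<n. z s i * P i j * z s j)) (at s)" for s
    by simp
  then have "F 0 \<le> F t"
    using psd by (intro DERIV_nonneg_imp_nondecreasing[OF t]) blast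
  moreover have "F 0 = 0" unfolding F_def decay_kernel_def by simp
  ultimately show ?thesis unfolding F_def by simp
qed

lemma kernel_scale_nonneg:
  assumes "0 < lam i" and "0 < t"
  shows "0 \<le> kernel_scale lam t i"
  using decay_kernel_pos[of lam i i t] assms unfolding kernel_scale_def by simp

lemma kernel_scale_sq_mult_decay_kernel:
  assumes "0 < lam i" and "0 < t"
  shows "(kernel_scale lam t i)\<^sup>2 * decay_kernel lam t i i = 1"
  using decay_kernel_pos[of lam i i t] assms unfolding kernel_scale_def by simp

text \<open>The normalised kernel restricted to {i, j} is positive semidefinite with unit diagonal.\<close>
lemma normalized_decay_kernel_le_one:
  assumes i: "0 < lam i" and j: "0 < lam j" and t: "0 < t"
  shows "kernel_scale lam t i * kernel_scale lam t j * decay_kernel lam t i j \<le> 1"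
proof -
  define idx where "idx k = (if k = 0 then i else j)" for k :: nat
  define y where "y k = (if k = 0 then kernel_scale lam t i else - kernel_scale lam t j)" for k :: nat
  have decay_kernel_comp: "decay_kernel (lam \<circ> idx) t k l = decay_kernel lam t (idx k) (idx l)"
    for k l by (simp add: decay_kernel_def)
  have all_ones_psd: "0 \<le> (\<Sum>k<2. \<Sum>l<2. z k * (1::real) * z l)" for z :: "nat \<Rightarrow> real"
  proof -
    have "(\<Sum>k<2. \<Sum>l<2. z k * (1::real) * z l) = (\<Sum>k<2. z k)\<^sup>2"
      by (simp add: power2_eq_square sum_distrib_left sum_distrib_right) (rule sum.swap)
    then show ?thesis by simp
  qed
  have "0 \<le> (\<Sum>k<2. \<Sum>l<2. y k * 1 * y l * decay_kernel (lam \<circ> idx) t k l)"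
    by (rule hadamard_decay_kernel_nonneg[OF all_ones_psd]) (use i j t in \<open>auto simp: idx_def\<close>)
  also have "\<dots> = (kernel_scale lam t i)\<^sup>2 * decay_kernel lam t i i
      + (kernel_scale lam t j)\<^sup>2 * decay_kernel lam t j j
      - 2 * (kernel_scale lam t i * kernel_scale lam t j * decay_kernel lam t i j)"
    using decay_kernel_commute[of lam t j i]
    by (simp add: numeral_2_eq_2 y_def idx_def decay_kernel_comp power2_eq_square algebra_simps)
  finally show ?thesis
    using kernel_scale_sq_mult_decay_kernel[of lam i t] kernel_scale_sq_mult_decay_kernel[of lam j t] i j t
    by simp
qed

lemma abs_normalized_decay_kernel_le_one:
  assumes "0 < lam i" and "0 < lam j" and "0 < t"
  shows "\<bar>kernel_scale lam t i * kernel_scale lam t j * decay_kernel lam t i j\<bar> \<le> 1"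
  using normalized_decay_kernel_le_one[OF assms] decay_kernel_pos[OF assms]
    kernel_scale_nonneg[of lam i t] kernel_scale_nonneg[of lam j t] assms by simp

lemma G_half_eq_mat_diag: "G_half m lam t = mat_diag m (kernel_scale lam t)"
  unfolding G_half_def g_t_def kernel_scale_def
  by (rule eq_matI) (auto simp: mat_diag_def decay_kernel_diag)

lemma tilde_t_carrier [simp]: "tilde_t m lam a t \<in> carrier_mat m m"
  unfolding tilde_t_def G_half_def mat_t_def by (rule mult_carrier_mat[OF mult_carrier_mat]) auto

lemma dim_tilde_t [simp]: "dim_row (tilde_t m lam a t) = m" "dim_col (tilde_t m lam a t) = m"
  using tilde_t_carrier by blast+

lemma tilde_t_entry:
  assumes "i < m" and "j < m"
  shows "tilde_t m lam a t $$ (i,j)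
    = kernel_scale lam t i * a $$ (i,j) * decay_kernel lam t i j * kernel_scale lam t j"
proof -
  have at: "mat_t m lam a t \<in> carrier_mat m m" unfolding mat_t_def by simp
  have "tilde_t m lam a t
      = mat m m (\<lambda>(i,j). kernel_scale lam t i * mat_t m lam a t $$ (i,j) * kernel_scale lam t j)"
    unfolding tilde_t_def G_half_eq_mat_diag mat_diag_mult_left[OF at]
    by (subst mat_diag_mult_right[of _ m]) auto
  then show ?thesis using assms by (simp add: mat_t_def decay_kernel_def)
qed

lemma transpose_tilde_t:
  assumes "a \<in> carrier_mat m m" and "transpose_mat a = a"
  shows "transpose_mat (tilde_t m lam a t) = tilde_t m lam a t"
  using transpose_mat_eq_self_entry[OF assms] decay_kernel_commute[of lam t]
  by (intro eq_matI) (auto simp: tilde_t_entry)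

lemma quad_form_tilde_t:
  "quad_form m (tilde_t m lam a t) x = (\<Sum>i<m. \<Sum>j<m.
     (kernel_scale lam t i * x i) * a $$ (i,j) * (kernel_scale lam t j * x j) * decay_kernel lam t i j)"
  unfolding quad_form_def by (intro sum.cong refl) (simp add: tilde_t_entry algebra_simps)

lemma loewner_le_quad_form_nonneg:
  fixes A B :: "real mat"
  assumes "A \<in> carrier_mat n n" and "B \<in> carrier_mat n n" and "loewner_le n A B"
  shows "0 \<le> (\<Sum>i<n. \<Sum>j<n. z i * (B $$ (i,j) - A $$ (i,j)) * z j)"
proof -
  have "0 \<le> vec n z \<bullet> ((B - A) *\<^sub>v vec n z)" using assms(3) unfolding loewner_le_def by simp
  also have "\<dots> = (\<Sum>i<n. \<Sum>j<n. z i * (B $$ (i,j) - A $$ (i,j)) * z j)"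
    using assms(1,2) by (simp add: scalar_prod_def sum_distrib_left atLeast0LessThan mult.assoc)
  finally show ?thesis .
qed

lemma quad_form_tilde_t_lower:
  assumes a: "a \<in> carrier_mat m m" and le: "loewner_le m (\<Lambda>0 \<cdot>\<^sub>m 1\<^sub>m m) a"
    and lam: "\<And>i. i < m \<Longrightarrow> 0 < lam i" and t: "0 < t"
  shows "\<Lambda>0 * (\<Sum>i<m. (x i)\<^sup>2) \<le> quad_form m (tilde_t m lam a t) x"
proof -
  define y where "y i = kernel_scale lam t i * x i" for i
  have "0 \<le> (\<Sum>i<m. \<Sum>j<m. y i * (a $$ (i,j) - (\<Lambda>0 \<cdot>\<^sub>m 1\<^sub>m m) $$ (i,j)) * y j * decay_kernel lam t i j)"
    using loewner_le_quad_form_nonneg[OF _ a le] lam t by (intro hadamard_decay_kernel_nonneg) auto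
  also have "\<dots> = quad_form m (tilde_t m lam a t) x
      - (\<Sum>i<m. \<Sum>j<m. if i = j then \<Lambda>0 * (y i * y j * decay_kernel lam t i j) else 0)"
    unfolding quad_form_tilde_t y_def[symmetric] sum_subtractf[symmetric]
    by (intro sum.cong refl) (auto simp: algebra_simps)
  also have "(\<Sum>i<m. \<Sum>j<m. if i = j then \<Lambda>0 * (y i * y j * decay_kernel lam t i j) else 0)
      = (\<Sum>i<m. \<Lambda>0 * (x i)\<^sup>2 * ((kernel_scale lam t i)\<^sup>2 * decay_kernel lam t i i))"
    by (intro sum.cong refl) (simp add: y_def power2_eq_square algebra_simps)
  also have "\<dots> = \<Lambda>0 * (\<Sum>i<m. (x i)\<^sup>2)"
    using kernel_scale_sq_mult_decay_kernel lam t by (simp add: sum_distrib_left)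
  finally show ?thesis by simp
qed

lemma schur_test:
  fixes E w :: "nat \<Rightarrow> nat \<Rightarrow> real" and x :: "nat \<Rightarrow> real"
  assumes w: "\<And>i j. i < m \<Longrightarrow> j < m \<Longrightarrow> \<bar>w i j\<bar> \<le> 1"
    and row: "\<And>i. i < m \<Longrightarrow> (\<Sum>j<m. \<bar>E i j\<bar>) \<le> s"
    and col: "\<And>j. j < m \<Longrightarrow> (\<Sum>i<m. \<bar>E i j\<bar>) \<le> s"
  shows "\<bar>\<Sum>i<m. \<Sum>j<m. x i * x j * w i j * E i j\<bar> \<le> s * (\<Sum>i<m. (x i)\<^sup>2)"
proof -
  have entry: "\<bar>x i * x j * w i j * E i j\<bar> \<le> \<bar>E i j\<bar> * (x i)\<^sup>2 / 2 + \<bar>E i j\<bar> * (x j)\<^sup>2 / 2"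
    if "i < m" "j < m" for i j
  proof -
    have "0 \<le> (\<bar>x i\<bar> - \<bar>x j\<bar>)\<^sup>2" by simp
    then have am_gm: "\<bar>x i * x j\<bar> \<le> ((x i)\<^sup>2 + (x j)\<^sup>2) / 2"
      by (simp add: abs_mult power2_eq_square algebra_simps)
    have "\<bar>x i * x j * w i j * E i j\<bar> = \<bar>x i * x j\<bar> * \<bar>E i j\<bar> * \<bar>w i j\<bar>"
      by (simp add: abs_mult)
    also have "\<dots> \<le> \<bar>x i * x j\<bar> * \<bar>E i j\<bar>"
      using w[OF that] by (intro mult_left_le) auto
    also have "\<dots> \<le> ((x i)\<^sup>2 + (x j)\<^sup>2) / 2 * \<bar>E i j\<bar>"
      using am_gm by (intro mult_right_mono) auto
    also have "\<dots> = \<bar>E i j\<bar> * (x i)\<^sup>2 / 2 + \<bar>E i j\<bar> * (x j)\<^sup>2 / 2"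
      by (simp add: algebra_simps add_divide_distrib)
    finally show ?thesis .
  qed
  have "\<bar>\<Sum>i<m. \<Sum>j<m. x i * x j * w i j * E i j\<bar> \<le> (\<Sum>i<m. \<bar>\<Sum>j<m. x i * x j * w i j * E i j\<bar>)"
    by (rule sum_abs)
  also have "\<dots> \<le> (\<Sum>i<m. \<Sum>j<m. \<bar>E i j\<bar> * (x i)\<^sup>2 / 2 + \<bar>E i j\<bar> * (x j)\<^sup>2 / 2)"
    by (rule sum_mono, rule order_trans[OF sum_abs], rule sum_mono, rule entry) auto
  also have "\<dots> = (\<Sum>i<m. (x i)\<^sup>2 / 2 * (\<Sum>j<m. \<bar>E i j\<bar>)) + (\<Sum>j<m. (x j)\<^sup>2 / 2 * (\<Sum>i<m. \<bar>E i j\<bar>))"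
  proof -
    have rows: "(\<Sum>i<m. (x i)\<^sup>2 / 2 * (\<Sum>j<m. \<bar>E i j\<bar>)) = (\<Sum>i<m. \<Sum>j<m. \<bar>E i j\<bar> * (x i)\<^sup>2 / 2)"
      by (simp add: sum_distrib_left sum_divide_distrib mult.commute)
    have cols: "(\<Sum>j<m. (x j)\<^sup>2 / 2 * (\<Sum>i<m. \<bar>E i j\<bar>)) = (\<Sum>i<m. \<Sum>j<m. \<bar>E i j\<bar> * (x j)\<^sup>2 / 2)"
      by (simp add: sum_distrib_left sum_divide_distrib mult.commute) (rule sum.swap)
    show ?thesis unfolding rows cols sum.distrib[symmetric] ..
  qed
  also have "\<dots> \<le> (\<Sum>i<m. (x i)\<^sup>2 / 2 * s) + (\<Sum>j<m. (x j)\<^sup>2 / 2 * s)"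
    using row col by (intro add_mono sum_mono mult_left_mono) auto
  also have "\<dots> = s * (\<Sum>i<m. (x i)\<^sup>2)"
    by (simp add: sum_distrib_left sum_distrib_right algebra_simps sum.distrib[symmetric])
  finally show ?thesis .
qed

lemma row_abs_sum_le_snorm: "i < m \<Longrightarrow> (\<Sum>j<m. \<bar>c $$ (i,j)\<bar>) \<le> snorm m c"
  unfolding snorm_def by (rule max.coboundedI1, rule Max_ge) auto

lemma col_abs_sum_le_snorm: "j < m \<Longrightarrow> (\<Sum>i<m. \<bar>c $$ (i,j)\<bar>) \<le> snorm m c"
  unfolding snorm_def by (rule max.coboundedI2, rule Max_ge) auto

lemma quad_form_tilde_t_diff:
  assumes a: "a \<in> carrier_mat m m" and b: "b \<in> carrier_mat m m"
    and lam: "\<And>i. i < m \<Longrightarrow> 0 < lam i" and t: "0 < t"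
  shows "\<bar>quad_form m (tilde_t m lam b t) x - quad_form m (tilde_t m lam a t) x\<bar>
    \<le> snorm m (a - b) * (\<Sum>i<m. (x i)\<^sup>2)"
proof -
  have "quad_form m (tilde_t m lam b t) x - quad_form m (tilde_t m lam a t) x
      = (\<Sum>i<m. \<Sum>j<m. x i * x j
          * (kernel_scale lam t i * kernel_scale lam t j * decay_kernel lam t i j)
          * (b $$ (i,j) - a $$ (i,j)))"
    unfolding quad_form_tilde_t sum_subtractf[symmetric]
    by (intro sum.cong refl) (simp add: algebra_simps)
  also have "\<bar>\<dots>\<bar> \<le> snorm m (a - b) * (\<Sum>i<m. (x i)\<^sup>2)"
  proof (rule schur_test)
    show "\<bar>kernel_scale lam t i * kernel_scale lam t j * decay_kernel lam t i j\<bar> \<le> 1"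
      if "i < m" "j < m" for i j
      using abs_normalized_decay_kernel_le_one lam that t by blast
    show "(\<Sum>j<m. \<bar>b $$ (i,j) - a $$ (i,j)\<bar>) \<le> snorm m (a - b)" if "i < m" for i
      using row_abs_sum_le_snorm[OF that, of "a - b"] a b that by (simp add: abs_minus_commute)
    show "(\<Sum>i<m. \<bar>b $$ (i,j) - a $$ (i,j)\<bar>) \<le> snorm m (a - b)" if "j < m" for j
      using col_abs_sum_le_snorm[OF that, of "a - b"] a b that by (simp add: abs_minus_commute)
  qed
  finally show ?thesis .
qed

theorem lemma4p6:
  fixes m :: nat and lam :: "nat \<Rightarrow> real" and \<Lambda>0 \<Lambda>1 :: real and a b :: "real mat"
  assumes "m \<ge> 1"
    and "0 < lam 0"
    and "\<And>i j. i \<le> j \<Longrightarrow> j < m \<Longrightarrow> lam i \<le> lam j"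
    and "0 < \<Lambda>0" and "\<Lambda>0 \<le> \<Lambda>1"
    and "a \<in> carrier_mat m m" and "b \<in> carrier_mat m m"
    and "transpose_mat a = a" and "transpose_mat b = b"
    and "loewner_le m (\<Lambda>0 \<cdot>\<^sub>m 1\<^sub>m m) a" and "loewner_le m a (\<Lambda>1 \<cdot>\<^sub>m 1\<^sub>m m)"
    and "loewner_le m (\<Lambda>0 \<cdot>\<^sub>m 1\<^sub>m m) b" and "loewner_le m b (\<Lambda>1 \<cdot>\<^sub>m 1\<^sub>m m)"
    and "\<theta> = m * snorm m (a - b) / \<Lambda>0"
    and "t > 0"
  shows "\<bar>det (tilde_t m lam b t) / det (tilde_t m lam a t) - 1\<bar> \<le> \<theta> * exp \<theta>"
proof -
  have lam: "\<And>i. i < m \<Longrightarrow> 0 < lam i"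
    using assms(2,3) by (meson le0 less_le_trans)
  have "\<bar>det (tilde_t m lam b t) / det (tilde_t m lam a t) - 1\<bar>
      \<le> m * snorm m (a - b) / \<Lambda>0 * exp (m * snorm m (a - b) / \<Lambda>0)"
  proof (rule det_ratio_bound_if_quad_form_close)
    show "transpose_mat (tilde_t m lam a t) = tilde_t m lam a t"
      "transpose_mat (tilde_t m lam b t) = tilde_t m lam b t"
      using transpose_tilde_t assms(6-9) by blast+
    show "\<Lambda>0 * (\<Sum>i<m. (x i)\<^sup>2) \<le> quad_form m (tilde_t m lam a t) x"
      "\<Lambda>0 * (\<Sum>i<m. (x i)\<^sup>2) \<le> quad_form m (tilde_t m lam b t) x" for x
      using quad_form_tilde_t_lower lam assms(6,7,10,12,15) by blast+
    show "\<bar>quad_form m (tilde_t m lam b t) x - quad_form m (tilde_t m lam a t) x\<bar>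
        \<le> snorm m (a - b) * (\<Sum>i<m. (x i)\<^sup>2)" for x
      using quad_form_tilde_t_diff lam assms(6,7,15) by blast
  qed (use assms(1,4) in auto)
  then show ?thesis using assms(14) by simp
qed

end
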